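(* For every $0<r<1$ there is an open set $U\subseteq2^\omega$ which is dualistic and satisfies $\mu(U)=\mu(\operatorname{Cl}U)=r$; moreover $\operatorname{Cl}U$ is also dualistic.
   Context: $2^{\omega}$ is the Cantor space; $N_s=\{x\in2^\omega:s\subset x\}$; $\mu$ is the coin-tossing measure, $\mu(N_s)=2^{-\mathrm{lh}(s)}$. For measurable $A$, $\mathcal{D}_A(z)=\lim_n\mu(A\cap N_{z\restriction n})/\mu(N_{z\restriction n})$ when the limit exists. $A$ is dualistic if for every $z\in2^\omega$ the limit $\mathcal{D}_A(z)$ exists and belongs to $\{0,1\}$. *)

theory Defs
  imports "HOL-Probability.Probability"
begin

text \<open>Cantor space is the type nat \<Rightarrow> bool with the library product topology
  (bool carries its order topology, which is discrete).\<close>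

definition cantor_measure :: "(nat \<Rightarrow> bool) measure" where
  "cantor_measure = (\<Pi>\<^sub>M i\<in>(UNIV::nat set). measure_pmf (bernoulli_pmf (1/2)))"

definition cyl :: "(nat \<Rightarrow> bool) \<Rightarrow> nat \<Rightarrow> (nat \<Rightarrow> bool) set" where
  "cyl z n = {x. \<forall>i<n. x i = z i}"

definition density_seq :: "(nat \<Rightarrow> bool) set \<Rightarrow> (nat \<Rightarrow> bool) \<Rightarrow> nat \<Rightarrow> real" where
  "density_seq A z n = measure cantor_measure (A \<inter> cyl z n) / measure cantor_measure (cyl z n)"

definition dualistic :: "(nat \<Rightarrow> bool) set \<Rightarrow> bool" where
  "dualistic A \<longleftrightarrow> A \<in> sets cantor_measure \<and>
     (\<forall>z. \<exists>d\<in>{0,1}. density_seq A z \<longlonglongrightarrow> d)"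

end

theory Submission
  imports Defs
begin

text \<open>
  Write \<open>r = \<Sum>i\<in>D. 2^-i\<close> in binary (\<open>0 \<notin> D\<close>). For \<open>i \<in> D\<close> take the cylinder of length \<open>i\<close>
  with word \<open>0^m 1 0^(i-m-1)\<close>, where \<open>m\<close> is the number of elements of \<open>D\<close> below \<open>i\<close>.
  These cylinders have measure \<open>2^-i\<close> and are pairwise disjoint, since their single ones sit at
  distinct positions; their union \<open>U\<close> is open of measure \<open>r\<close>. A point \<open>z \<noteq> 0\<close> whose first one is
  at position \<open>k\<close> can only meet the cylinder with \<open>m = k\<close>, so small cylinders around \<open>z\<close> lie
  inside or outside \<open>U\<close>: the density at \<open>z\<close> is 0 or 1, and \<open>Cl U \<subseteq> U \<union> {0}\<close>, so \<open>Cl U\<close> has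
  the same measure and densities as \<open>U\<close>. Near \<open>0\<close>, a cylinder meeting \<open>N_{0^n}\<close> has \<open>m \<ge> n\<close>,
  hence length at least \<open>n\<close> plus the number of zero digits of \<open>r\<close> below \<open>n\<close>; as \<open>r\<close> has
  infinitely many zero digits, the density at \<open>0\<close> tends to 0.
\<close>

lemma prob_space_cantor_measure: "prob_space cantor_measure"
  unfolding cantor_measure_def by (rule prob_space_PiM) (simp add: prob_space_measure_pmf)

interpretation cantor: prob_space cantor_measure
  by (rule prob_space_cantor_measure)

lemma space_cantor_measure [simp]: "space cantor_measure = UNIV"
  by (simp add: cantor_measure_def space_PiM)

lemma cyl_eq_prod_emb:
  "cyl z n = prod_emb UNIV (\<lambda>_. measure_pmf (bernoulli_pmf (1/2))) {..<n} (\<Pi>\<^sub>E i\<in>{..<n}. {z i})"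
  by (auto simp: cyl_def prod_emb_iff restrict_PiE_iff)

lemma sets_cyl [simp]: "cyl z n \<in> sets cantor_measure"
  unfolding cyl_eq_prod_emb cantor_measure_def by (rule sets_PiM_I) auto

lemma measure_cyl: "measure cantor_measure (cyl z n) = (1/2)^n"
proof -
  have "emeasure cantor_measure (cyl z n)
      = (\<Prod>i<n. emeasure (measure_pmf (bernoulli_pmf (1/2))) {z i})"
    unfolding cyl_eq_prod_emb cantor_measure_def
    by (rule emeasure_PiM_emb) (auto simp: prob_space_measure_pmf)
  also have "\<dots> = ennreal (1/2) ^ n"
    by (simp add: emeasure_pmf_single)
  also have "\<dots> = ennreal ((1/2)^n)"
    by (simp only: ennreal_power)
  finally show ?thesis by (simp add: measure_def)
qed

lemma open_cyl: "open (cyl z n)"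
proof -
  have "cyl z n = (\<Inter>t<n. (\<lambda>x. x t) -` {z t})" by (auto simp: cyl_def)
  moreover have "open ((\<lambda>x::nat \<Rightarrow> bool. x t) -` {z t})" for t
    by (rule open_vimage) (auto simp: discrete_topology_class.open_discrete)
  ultimately show ?thesis by auto
qed

lemma self_in_cyl [simp]: "z \<in> cyl z n"
  by (simp add: cyl_def)

lemma mem_cyl_cong: "m \<le> n \<Longrightarrow> y \<in> cyl z n \<Longrightarrow> y \<in> cyl w m \<longleftrightarrow> z \<in> cyl w m"
  by (auto simp: cyl_def)

lemma sets_cantor_singleton [simp]: "{z} \<in> sets cantor_measure"
proof -
  have "{z} = (\<Inter>n. cyl z n)" by (auto simp: cyl_def)
  also have "\<dots> \<in> sets cantor_measure" by (rule sets.countable_INT) auto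
  finally show ?thesis .
qed

lemma measure_cantor_singleton: "measure cantor_measure {z} = 0"
proof -
  have "decseq (cyl z)" by (auto simp: decseq_def cyl_def)
  then have "(\<lambda>n. measure cantor_measure (cyl z n)) \<longlonglongrightarrow> measure cantor_measure (\<Inter>n. cyl z n)"
    by (intro cantor.finite_Lim_measure_decseq) auto
  moreover have "(\<Inter>n. cyl z n) = {z}" by (auto simp: cyl_def)
  moreover have "(\<lambda>n. measure cantor_measure (cyl z n)) \<longlonglongrightarrow> 0"
    by (simp add: measure_cyl LIMSEQ_power_zero)
  ultimately show ?thesis using LIMSEQ_unique by metis
qed

lemma measure_UN_shift_le:
  assumes "\<And>i. A i \<in> sets cantor_measure" and "\<And>i. measure cantor_measure (A i) \<le> (1/2)^i"
  shows "measure cantor_measure (\<Union>i. A (i + g)) \<le> 2 * (1/2)^g"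
proof -
  have geom: "(\<lambda>i. (1/2)^g * (1/2::real)^i) sums ((1/2)^g * 2)"
    using sums_mult[OF geometric_sums, of "1/2::real" "(1/2)^g"] by simp
  have le: "measure cantor_measure (A (i + g)) \<le> (1/2)^g * (1/2)^i" for i
    using assms(2)[of "i + g"] by (simp add: power_add mult.commute)
  have "summable (\<lambda>i. measure cantor_measure (A (i + g)))"
    by (rule summable_comparison_test[OF _ sums_summable[OF geom]]) (use le in auto)
  then have "measure cantor_measure (\<Union>i. A (i + g)) \<le> (\<Sum>i. measure cantor_measure (A (i + g)))"
    by (intro cantor.finite_measure_subadditive_countably) (use assms(1) in auto)
  also have "\<dots> \<le> (1/2)^g * 2"
    by (rule suminf_le[OF le \<open>summable _\<close> sums_summable[OF geom], unfolded sums_unique[OF geom, symmetric]])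
  finally show ?thesis by simp
qed

lemma density_seq_tendsto_0_or_1:
  assumes "(\<forall>\<^sub>F n in sequentially. cyl z n \<subseteq> A) \<or> (\<forall>\<^sub>F n in sequentially. A \<inter> cyl z n = {})"
  shows "\<exists>d\<in>{0,1}. density_seq A z \<longlonglongrightarrow> d"
  using assms
proof
  assume "\<forall>\<^sub>F n in sequentially. cyl z n \<subseteq> A"
  then have "\<forall>\<^sub>F n in sequentially. density_seq A z n = 1"
    by eventually_elim (simp add: density_seq_def Int_absorb1 measure_cyl)
  then show ?thesis using tendsto_eventually by blast
next
  assume "\<forall>\<^sub>F n in sequentially. A \<inter> cyl z n = {}"
  then have "\<forall>\<^sub>F n in sequentially. density_seq A z n = 0"
    by eventually_elim (simp add: density_seq_def)
  then show ?thesis using tendsto_eventually by blast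
qed

lemma mem_closure_if_eventually_decided:
  assumes "(\<forall>\<^sub>F n in sequentially. cyl z n \<subseteq> A) \<or> (\<forall>\<^sub>F n in sequentially. A \<inter> cyl z n = {})"
    and "z \<in> closure A"
  shows "z \<in> A"
proof -
  obtain n where "cyl z n \<subseteq> A \<or> A \<inter> cyl z n = {}"
    using assms(1) by (auto simp: eventually_sequentially)
  moreover have "cyl z n \<inter> A \<noteq> {}"
    using assms(2) open_Int_closure_eq_empty[OF open_cyl, of z n A] self_in_cyl[of z n] by blast
  ultimately show ?thesis using self_in_cyl[of z n] by blast
qed

lemma sets_between_insert:
  assumes "A \<in> sets cantor_measure" and "A \<subseteq> B" and "B \<subseteq> insert p A"
  shows "B \<in> sets cantor_measure"
proof -
  have "B = A \<union> (B \<inter> {p})" using assms(2,3) by blast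
  moreover have "B \<inter> {p} \<in> sets cantor_measure" by (cases "p \<in> B") auto
  ultimately show ?thesis using assms(1) by (metis sets.Un)
qed

lemma measure_Int_between_insert:
  assumes "A \<in> sets cantor_measure" and "A \<subseteq> B" and "B \<subseteq> insert p A"
    and "C \<in> sets cantor_measure"
  shows "measure cantor_measure (B \<inter> C) = measure cantor_measure (A \<inter> C)"
proof -
  have B: "B \<in> sets cantor_measure" by (rule sets_between_insert[OF assms(1-3)])
  have "measure cantor_measure (B \<inter> C - A \<inter> C) \<le> measure cantor_measure {p}"
    using assms B by (intro cantor.finite_measure_mono) auto
  then have "measure cantor_measure (B \<inter> C - A \<inter> C) = 0"
    by (simp add: measure_cantor_singleton measure_le_0_iff)
  then show ?thesis
    using assms B by (subst (asm) cantor.finite_measure_Diff) auto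
qed

lemma dualistic_between_insert:
  assumes "dualistic A" and "A \<subseteq> B" and "B \<subseteq> insert p A"
  shows "dualistic B"
proof -
  have A: "A \<in> sets cantor_measure" using assms(1) by (simp add: dualistic_def)
  have "density_seq B = density_seq A"
    using measure_Int_between_insert[OF A assms(2,3) sets_cyl] by (simp add: density_seq_def fun_eq_iff)
  then show ?thesis using assms(1) sets_between_insert[OF A assms(2,3)] by (simp add: dualistic_def)
qed

definition count_below :: "(nat \<Rightarrow> bool) \<Rightarrow> nat \<Rightarrow> nat" where
  "count_below P n = card {j. j < n \<and> P j}"

lemma count_below_add_count_below_not: "count_below P n + count_below (\<lambda>j. \<not> P j) n = n"
proof -
  have "card {j. j < n \<and> P j} + card {j. j < n \<and> \<not> P j}
      = card ({j. j < n \<and> P j} \<union> {j. j < n \<and> \<not> P j})"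
    by (rule card_Un_disjoint[symmetric]) auto
  also have "{j. j < n \<and> P j} \<union> {j. j < n \<and> \<not> P j} = {..<n}" by auto
  finally show ?thesis by (simp add: count_below_def)
qed

lemma count_below_mono: "m \<le> n \<Longrightarrow> count_below P m \<le> count_below P n"
  unfolding count_below_def by (rule card_mono) auto

lemma count_below_strict_mono: "P m \<Longrightarrow> m < n \<Longrightarrow> count_below P m < count_below P n"
  unfolding count_below_def by (rule psubset_card_mono) auto

lemma count_below_less: "j < n \<Longrightarrow> \<not> P j \<Longrightarrow> count_below P n < n"
  unfolding count_below_def using psubset_card_mono[of "{..<n}" "{j. j < n \<and> P j}"] by force

lemma filterlim_count_below_at_top:
  assumes "infinite {j. P j}"
  shows "filterlim (count_below P) at_top sequentially"
proof -
  have "\<exists>N. K \<le> count_below P N" for K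
  proof (induction K)
    case (Suc K)
    then obtain N where N: "K \<le> count_below P N" by blast
    obtain j where "N \<le> j" "P j" using assms by (auto simp: infinite_nat_iff_unbounded_le)
    then have "count_below P N < count_below P (Suc j)"
      using count_below_mono count_below_strict_mono[of P j "Suc j"] by (meson le_less_trans lessI)
    then show ?case using N by (intro exI[of _ "Suc j"]) simp
  qed simp
  then show ?thesis
    unfolding filterlim_at_top eventually_sequentially by (meson count_below_mono order_trans)
qed

definition bindigit :: "real \<Rightarrow> nat \<Rightarrow> bool" where
  "bindigit r i \<longleftrightarrow> odd \<lfloor>2^i * r\<rfloor>"

lemma floor_double: "\<lfloor>2 * y\<rfloor> = 2 * \<lfloor>y\<rfloor> + (if odd \<lfloor>2 * y\<rfloor> then 1 else 0)" for y :: real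
proof -
  have "2 * \<lfloor>y\<rfloor> \<le> \<lfloor>2 * y\<rfloor>" by (simp add: le_floor_iff)
  moreover have "\<lfloor>2 * y\<rfloor> < 2 * \<lfloor>y\<rfloor> + 2" by (simp add: floor_less_iff) linarith
  ultimately have "\<lfloor>2 * y\<rfloor> = 2 * \<lfloor>y\<rfloor> \<or> \<lfloor>2 * y\<rfloor> = 2 * \<lfloor>y\<rfloor> + 1" by linarith
  then show ?thesis by auto
qed

lemma floor_pow2_Suc: "\<lfloor>2^Suc n * r\<rfloor> = 2 * \<lfloor>2^n * r\<rfloor> + (if bindigit r (Suc n) then 1 else 0)"
  using floor_double[of "2^n * r"] by (simp add: bindigit_def mult.assoc)

lemma floor_pow2_divide_tendsto: "(\<lambda>n. \<lfloor>2^n * r\<rfloor> / 2^n) \<longlonglongrightarrow> r"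
proof (rule tendsto_sandwich[of "\<lambda>n. r - (1/2)^n" _ _ "\<lambda>_. r"])
  have "r - (1/2)^n \<le> \<lfloor>2^n * r\<rfloor> / 2^n" for n :: nat
  proof -
    have "2^n * r - 1 \<le> \<lfloor>2^n * r\<rfloor>" by linarith
    then have "(2^n * r - 1) / 2^n \<le> \<lfloor>2^n * r\<rfloor> / (2::real)^n"
      by (intro divide_right_mono) auto
    then show ?thesis by (simp add: field_simps power_divide)
  qed
  then show "\<forall>\<^sub>F n in sequentially. r - (1/2)^n \<le> \<lfloor>2^n * r\<rfloor> / 2^n"
    by simp
  show "\<forall>\<^sub>F n in sequentially. \<lfloor>2^n * r\<rfloor> / 2^n \<le> r"
    by (simp add: field_simps)
  have "(\<lambda>n. r - (1/2::real)^n) \<longlonglongrightarrow> r - 0"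
    by (intro tendsto_intros) simp
  then show "(\<lambda>n. r - (1/2::real)^n) \<longlonglongrightarrow> r" by simp
qed simp

context
  fixes r :: real
  assumes r: "0 \<le> r" "r < 1"
begin

lemma floor_eq_0: "\<lfloor>r\<rfloor> = 0"
  using r by (simp add: floor_eq_iff)

lemma not_bindigit_0: "\<not> bindigit r 0"
  by (simp add: bindigit_def floor_eq_0)

lemma bindigit_partial_sum:
  "(\<Sum>i<Suc n. if bindigit r i then (1/2)^i else 0) = \<lfloor>2^n * r\<rfloor> / 2^n"
proof (induction n)
  case 0
  then show ?case by (simp add: not_bindigit_0 floor_eq_0)
next
  case (Suc n)
  have "(\<Sum>i<Suc (Suc n). if bindigit r i then (1/2::real)^i else 0)
      = \<lfloor>2^n * r\<rfloor> / 2^n + (if bindigit r (Suc n) then (1/2)^Suc n else 0)"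
    using Suc by simp
  also have "\<dots> = \<lfloor>2^Suc n * r\<rfloor> / 2^Suc n"
    unfolding floor_pow2_Suc by (auto simp: field_simps power_divide)
  finally show ?case .
qed

lemma bindigit_sums: "(\<lambda>i. if bindigit r i then (1/2)^i else 0) sums r"
  unfolding sums_def
  by (rule LIMSEQ_imp_Suc) (simp only: bindigit_partial_sum floor_pow2_divide_tendsto)

end

lemma infinite_not_bindigit: "infinite {i. \<not> bindigit r i}"
proof
  assume "finite {i. \<not> bindigit r i}"
  then obtain N where N: "\<And>j. N \<le> j \<Longrightarrow> bindigit r j"
    by (metis (mono_tags) infinite_nat_iff_unbounded_le mem_Collect_eq)
  \<comment> \<open>then the dyadic upper bounds \<open>b n > r\<close> would be constant from \<open>N\<close> on, yet tend to \<open>r\<close>\<close>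
  define b where "b n = (\<lfloor>2^n * r\<rfloor> + 1) / (2::real)^n" for n
  have b_const: "b (k + N) = b N" for k
  proof (induction k)
    case (Suc k)
    have "b (Suc (k + N)) = b (k + N)"
      using N[of "Suc (k + N)"] unfolding b_def floor_pow2_Suc by (simp add: field_simps)
    then show ?case using Suc by simp
  qed simp
  have "b = (\<lambda>n. \<lfloor>2^n * r\<rfloor> / 2^n + (1/2)^n)"
    by (simp add: fun_eq_iff b_def add_divide_distrib power_divide)
  moreover have "(\<lambda>n. \<lfloor>2^n * r\<rfloor> / 2^n + (1/2::real)^n) \<longlonglongrightarrow> r + 0"
    by (intro tendsto_add floor_pow2_divide_tendsto LIMSEQ_power_zero) simp
  ultimately have "b \<longlonglongrightarrow> r" by simp
  then have "(\<lambda>k. b N) \<longlonglongrightarrow> r"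
    using LIMSEQ_ignore_initial_segment[of b r N] by (simp add: b_const)
  then have "b N = r" by (simp add: LIMSEQ_const_iff)
  moreover have "2^N * r < \<lfloor>2^N * r\<rfloor> + 1" by linarith
  then have "r < b N" by (simp add: b_def field_simps)
  ultimately show False by simp
qed

definition unit_cyl :: "nat \<Rightarrow> nat \<Rightarrow> (nat \<Rightarrow> bool) set" where
  "unit_cyl m i = cyl (\<lambda>t. t = m) i"

lemma mem_unit_cyl: "x \<in> unit_cyl m i \<longleftrightarrow> (\<forall>t<i. x t \<longleftrightarrow> t = m)"
  by (auto simp: unit_cyl_def cyl_def)

lemma unit_cyl_disjoint:
  assumes "m < i" and "m' < i'" and "m \<noteq> m'"
  shows "unit_cyl m i \<inter> unit_cyl m' i' = {}"
  using assms by (auto simp: mem_unit_cyl) (metis linorder_neqE_nat order.strict_trans)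

lemma unit_cyl_first_one:
  assumes "x \<in> unit_cyl m i" and "m < i" and "x \<in> cyl z n" and "k < n"
    and "z k" and "\<forall>t<k. \<not> z t"
  shows "m = k"
proof (rule linorder_cases[of m k])
  assume "m < k"
  then show ?thesis using assms by (auto simp: mem_unit_cyl cyl_def)
next
  assume "k < m"
  then show ?thesis using assms by (auto simp: mem_unit_cyl cyl_def)
qed

definition spike :: "(nat \<Rightarrow> bool) \<Rightarrow> nat \<Rightarrow> (nat \<Rightarrow> bool) set" where
  "spike P i = (if P i then unit_cyl (count_below P i) i else {})"

definition spike_union :: "(nat \<Rightarrow> bool) \<Rightarrow> (nat \<Rightarrow> bool) set" where
  "spike_union P = (\<Union>i. spike P i)"

lemma sets_spike [simp]: "spike P i \<in> sets cantor_measure"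
  by (simp add: spike_def unit_cyl_def)

lemma measure_spike: "measure cantor_measure (spike P i) = (if P i then (1/2)^i else 0)"
  by (simp add: spike_def unit_cyl_def measure_cyl)

lemma sets_spike_union: "spike_union P \<in> sets cantor_measure"
  by (auto simp: spike_union_def)

lemma open_spike_union: "open (spike_union P)"
  by (auto simp: spike_union_def spike_def unit_cyl_def open_cyl)

lemma mem_spike_union: "x \<in> spike_union P \<longleftrightarrow> (\<exists>i. P i \<and> x \<in> unit_cyl (count_below P i) i)"
  by (auto simp: spike_union_def spike_def split: if_splits)

context
  fixes P :: "nat \<Rightarrow> bool"
  assumes not_P_0: "\<not> P 0"
begin

lemma count_below_less_self: "P i \<Longrightarrow> count_below P i < i"
  using not_P_0 by (intro count_below_less[of 0]) (auto intro: gr0I)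

lemma disjoint_family_spike: "disjoint_family (spike P)"
  unfolding disjoint_family_on_def
proof (intro ballI impI)
  fix i j :: nat assume "i \<noteq> j"
  then have "P i \<Longrightarrow> P j \<Longrightarrow> count_below P i \<noteq> count_below P j"
    by (metis count_below_strict_mono less_irrefl linorder_neqE_nat)
  then show "spike P i \<inter> spike P j = {}"
    using unit_cyl_disjoint[OF count_below_less_self count_below_less_self, of i j]
    by (auto simp: spike_def)
qed

lemma spike_union_measure_sums:
  "(\<lambda>i. if P i then (1/2)^i else 0) sums measure cantor_measure (spike_union P)"
  using cantor.finite_measure_UNION[of "spike P"] disjoint_family_spike
  by (simp add: spike_union_def measure_spike image_subset_iff)

lemma spike_union_eventually_decided:
  assumes "z k" and "\<forall>t<k. \<not> z t"
  shows "(\<forall>\<^sub>F n in sequentially. cyl z n \<subseteq> spike_union P) \<or>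
         (\<forall>\<^sub>F n in sequentially. spike_union P \<inter> cyl z n = {})"
proof -
  have spike_at_k: "\<exists>i. P i \<and> count_below P i = k \<and> x \<in> unit_cyl k i"
    if x: "x \<in> spike_union P \<inter> cyl z n" and "k < n" for x n
  proof -
    obtain i where i: "P i" "x \<in> unit_cyl (count_below P i) i"
      using x by (auto simp: mem_spike_union)
    then have "count_below P i = k"
      using unit_cyl_first_one[OF i(2) count_below_less_self[OF i(1)]] x \<open>k < n\<close> assms by auto
    then show ?thesis using i by auto
  qed
  show ?thesis
  proof (cases "\<exists>i. P i \<and> count_below P i = k")
    case False
    then have "spike_union P \<inter> cyl z n = {}" if "k < n" for n
      using spike_at_k[OF _ that] by blast
    then have "\<forall>\<^sub>F n in sequentially. spike_union P \<inter> cyl z n = {}"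
      unfolding eventually_sequentially by (intro exI[of _ "Suc k"]) auto
    then show ?thesis ..
  next
    case True
    then obtain i where i: "P i" "count_below P i = k" by blast
    have unique: "j = i" if "P j" and "count_below P j = k" for j
      using that i by (metis count_below_strict_mono less_irrefl linorder_neqE_nat)
    show ?thesis
    proof (cases "z \<in> unit_cyl k i")
      case True
      have "cyl z n \<subseteq> spike_union P" if "i \<le> n" for n
      proof
        fix y assume "y \<in> cyl z n"
        then have "y \<in> unit_cyl k i"
          using True mem_cyl_cong[OF that \<open>y \<in> cyl z n\<close>] by (simp add: unit_cyl_def)
        then show "y \<in> spike_union P" using i by (auto simp: mem_spike_union)
      qed
      then have "\<forall>\<^sub>F n in sequentially. cyl z n \<subseteq> spike_union P"
        unfolding eventually_sequentially by blast
      then show ?thesis ..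
    next
      case False
      have "spike_union P \<inter> cyl z n = {}" if kn: "k < n" and iN: "i \<le> n" for n
      proof (rule ccontr)
        assume "spike_union P \<inter> cyl z n \<noteq> {}"
        then obtain x where x: "x \<in> spike_union P \<inter> cyl z n" by blast
        then obtain j where "P j" "count_below P j = k" "x \<in> unit_cyl k j"
          using spike_at_k[OF x kn] by blast
        then have "x \<in> unit_cyl k i" using unique by blast
        then have "z \<in> unit_cyl k i"
          using x mem_cyl_cong[OF iN, of x z] by (simp add: unit_cyl_def)
        then show False using False by contradiction
      qed
      then have "\<forall>\<^sub>F n in sequentially. spike_union P \<inter> cyl z n = {}"
        unfolding eventually_sequentially by (intro exI[of _ "max (Suc k) i"]) auto
      then show ?thesis ..
    qed
  qed
qed

lemma closure_spike_union_subset: "closure (spike_union P) \<subseteq> insert (\<lambda>_. False) (spike_union P)"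
proof
  fix z assume z: "z \<in> closure (spike_union P)"
  show "z \<in> insert (\<lambda>_. False) (spike_union P)"
  proof (cases "z = (\<lambda>_. False)")
    case False
    then obtain k where "z k" "\<forall>t<k. \<not> z t" using exists_least_iff[of z] by auto
    then show ?thesis
      using mem_closure_if_eventually_decided[OF spike_union_eventually_decided z] by simp
  qed simp
qed

lemma spike_union_Int_cyl_False_subset:
  "spike_union P \<inter> cyl (\<lambda>_. False) n \<subseteq> (\<Union>i. spike P (i + (n + count_below (\<lambda>j. \<not> P j) n)))"
proof
  let ?g = "n + count_below (\<lambda>j. \<not> P j) n"
  fix x assume x: "x \<in> spike_union P \<inter> cyl (\<lambda>_. False) n"
  then obtain i where i: "P i" "x \<in> unit_cyl (count_below P i) i" by (auto simp: mem_spike_union)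
  have less: "count_below P i < i" using i(1) by (rule count_below_less_self)
  then have "x (count_below P i)" using i(2) by (simp add: mem_unit_cyl)
  then have "n \<le> count_below P i" using x by (auto simp: cyl_def not_le[symmetric])
  then have "?g \<le> i"
    using count_below_add_count_below_not[of P i] count_below_mono[of n i "\<lambda>j. \<not> P j"] less by linarith
  then have "x \<in> spike P ((i - ?g) + ?g)" using i by (simp add: spike_def)
  then show "x \<in> (\<Union>i. spike P (i + ?g))" by blast
qed

lemma density_seq_spike_union_False:
  assumes "infinite {j. \<not> P j}"
  shows "density_seq (spike_union P) (\<lambda>_. False) \<longlonglongrightarrow> 0"
proof (rule Lim_null_comparison)
  let ?c = "count_below (\<lambda>j. \<not> P j)"
  show "\<forall>\<^sub>F n in sequentially. norm (density_seq (spike_union P) (\<lambda>_. False) n) \<le> 2 * (1/2)^?c n"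
  proof (intro always_eventually allI)
    fix n
    have "measure cantor_measure (spike_union P \<inter> cyl (\<lambda>_. False) n)
        \<le> measure cantor_measure (\<Union>i. spike P (i + (n + ?c n)))"
      by (rule cantor.finite_measure_mono[OF spike_union_Int_cyl_False_subset]) auto
    also have "\<dots> \<le> 2 * (1/2)^(n + ?c n)"
      by (rule measure_UN_shift_le) (auto simp: measure_spike)
    finally show "norm (density_seq (spike_union P) (\<lambda>_. False) n) \<le> 2 * (1/2)^?c n"
      by (simp add: density_seq_def measure_cyl power_add field_simps)
  qed
  show "(\<lambda>n. 2 * (1/2::real)^?c n) \<longlonglongrightarrow> 0"
    using filterlim_compose[OF LIMSEQ_power_zero filterlim_count_below_at_top[OF assms], of "1/2::real"]
      tendsto_mult_right_zero by auto
qed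

lemma dualistic_spike_union:
  assumes "infinite {j. \<not> P j}"
  shows "dualistic (spike_union P)"
  unfolding dualistic_def
proof (intro conjI allI sets_spike_union)
  fix z
  show "\<exists>d\<in>{0,1}. density_seq (spike_union P) z \<longlonglongrightarrow> d"
  proof (cases "z = (\<lambda>_. False)")
    case True
    then show ?thesis using density_seq_spike_union_False[OF assms] by auto
  next
    case False
    then obtain k where "z k" "\<forall>t<k. \<not> z t" using exists_least_iff[of z] by auto
    then show ?thesis by (intro density_seq_tendsto_0_or_1 spike_union_eventually_decided)
  qed
qed

end

theorem proposition3p9:
  fixes r :: real
  assumes "0 < r" and "r < 1"
  shows "\<exists>U :: (nat \<Rightarrow> bool) set. open U \<and> dualistic U \<and>
           measure cantor_measure U = r \<and> measure cantor_measure (closure U) = r \<and>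
           dualistic (closure U)"
proof (intro exI conjI)
  let ?U = "spike_union (bindigit r)"
  have r: "0 \<le> r" "r < 1" using assms by simp_all
  note not_bindigit_0 = not_bindigit_0[OF r]
  have closure: "?U \<subseteq> closure ?U" "closure ?U \<subseteq> insert (\<lambda>_. False) ?U"
    by (simp_all add: closure_subset closure_spike_union_subset[of "bindigit r", OF not_bindigit_0])
  show "open ?U" by (rule open_spike_union)
  show dual: "dualistic ?U"
    by (rule dualistic_spike_union[of "bindigit r", OF not_bindigit_0 infinite_not_bindigit])
  show measure: "measure cantor_measure ?U = r"
    using sums_unique2[OF spike_union_measure_sums[of "bindigit r", OF not_bindigit_0] bindigit_sums[OF r]] .
  show "measure cantor_measure (closure ?U) = r"
    using measure_Int_between_insert[OF sets_spike_union closure sets.top] measure by simp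
  show "dualistic (closure ?U)"
    by (rule dualistic_between_insert[OF dual closure])
qed

end
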